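(* Let $1<\alpha\leq2$, let $X$ be a scalar symmetric $\alpha$-stable Lévy process with $X_0=0$ and $\mathbb{E}[e^{iuX_t}]=e^{-|u|^\alpha t}$, let $T>0$, $n\in\mathbb{N}$, $\Delta_n=T/n$, $t_k=k\Delta_n$. Let $-\infty\leq a\leq b\leq\infty$, $g=\mathbf{1}_{[a,b]}$, and for $0\leq t,t'\leq T$ set \[ E_{t,t'}=\mathbb{E}\bigl[(g(X_t)-g(X_{\Delta_n\lfloor t/\Delta_n\rfloor}))(g(X_{t'})-g(X_{\Delta_n\lfloor t'/\Delta_n\rfloor}))\bigr]. \] Then for sufficiently small $\varepsilon>0$, with implicit constants independent of $t,t',k,k',n,T,a,b$: (i) if $t_{k-1}\leq t<t_k$ and $t_{k'-1}\leq t'<t_{k'}$ with $k<k'$, then \[ |E_{t,t'}|\lesssim(1\vee T^{\varepsilon/\alpha})\bigl(t_{k-1}^{-(1+\varepsilon)/\alpha}\Delta_n^{1/\alpha}+t_{k-1}^{-1-\varepsilon/\alpha}\Delta_n\log n\bigr); \] (ii) if $t_{k-1}<t<t'<t_k$, then \[ |E_{t,t'}|\lesssim\Delta_n^{1/\alpha}\bigl(t_{k-1}^{-1/\alpha}+t_{k-1}^{-(1+\varepsilon)/\alpha}\bigr)+\Delta_n^{1-\varepsilon/\alpha}t_{k-1}^{-1-\varepsilon/\alpha}+\Delta_n^{1-2\varepsilon/\alpha}t_{k-1}^{-1}. \]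
   Context: $f\lesssim g$ means $f\leq Cg$ for a finite constant $C$ (depending only on $\alpha,\varepsilon$). When $a=-\infty$ or $b=\infty$, $[a,b]$ denotes the corresponding closed half-line or $\mathbb{R}$. *)

theory Defs
  imports "HOL-Probability.Probability"
begin

definition sym_stable_levy :: "'a measure \<Rightarrow> real \<Rightarrow> (real \<Rightarrow> 'a \<Rightarrow> real) \<Rightarrow> bool" where
  "sym_stable_levy M \<alpha> X \<longleftrightarrow>
     prob_space M \<and>
     (\<forall>t\<ge>0. X t \<in> borel_measurable M) \<and>
     (AE \<omega> in M. X 0 \<omega> = 0) \<and>
     (\<forall>(ts :: nat \<Rightarrow> real) m. 0 \<le> ts 0 \<and> (\<forall>i<m. ts i \<le> ts (Suc i)) \<longrightarrow>
        prob_space.indep_vars M (\<lambda>_. borel) (\<lambda>i \<omega>. X (ts (Suc i)) \<omega> - X (ts i) \<omega>) {..<m}) \<and>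
     (\<forall>s t u. 0 \<le> s \<and> s \<le> t \<longrightarrow>
        char (distr M borel (\<lambda>\<omega>. X t \<omega> - X s \<omega>)) u
          = complex_of_real (exp (- (\<bar>u\<bar> powr \<alpha>) * (t - s))))"

definition ind_ab :: "ereal \<Rightarrow> ereal \<Rightarrow> real \<Rightarrow> real" where
  "ind_ab a b x = (if a \<le> ereal x \<and> ereal x \<le> b then 1 else 0)"

definition E_tt :: "'a measure \<Rightarrow> (real \<Rightarrow> 'a \<Rightarrow> real) \<Rightarrow> ereal \<Rightarrow> ereal \<Rightarrow> real \<Rightarrow> real \<Rightarrow> real \<Rightarrow> real" where
  "E_tt M X a b \<Delta> t t' =
     integral\<^sup>L M (\<lambda>\<omega>.
       (ind_ab a b (X t \<omega>) - ind_ab a b (X (\<Delta> * real_of_int \<lfloor>t / \<Delta>\<rfloor>) \<omega>)) *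
       (ind_ab a b (X t' \<omega>) - ind_ab a b (X (\<Delta> * real_of_int \<lfloor>t' / \<Delta>\<rfloor>) \<omega>)))"

end

theory Submission
  imports Defs
begin

(* Write s = t_(k-1). The product inside E_(t,t') vanishes unless g(X_t) differs from g(X_s), so
   |E_(t,t')| <= P(g(X_t) ~= g(X_s)) whatever t' is. Such a change forces X_s to lie within
   |X_t - X_s| of an endpoint c of [a,b]. By Levy inversion X_s has a density bounded by a multiple of
   s^(-1/alpha), because its characteristic function is dominated by a Cauchy kernel of scale
   s^(1/alpha); by the truncation inequality the independent increment X_t - X_s has tails of order
   (t - s) x^(-alpha). Summing over the dyadic shells of |X_t - X_s| gives
   P(|X_s - c| <= |X_t - X_s|) <= C ((t - s) / s)^(1/alpha) <= C (Delta_n / t_(k-1))^(1/alpha),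
   and this single bound is dominated by the right-hand sides of both (i) and (ii), for every
   epsilon >= 0. *)

lemma exp_neg_le_cauchy:
  fixes w :: real
  assumes "0 \<le> w"
  shows "exp (- w) \<le> 2 / (1 + w\<^sup>2)"
proof -
  have "(1 + w\<^sup>2) / 2 \<le> exp w"
    using exp_lower_Taylor_quadratic[OF assms] assms by (simp add: power2_eq_square)
  then show ?thesis
    by (simp add: exp_minus field_simps add_pos_nonneg)
qed

lemma exp_neg_powr_le_cauchy:
  fixes \<alpha> s u :: real
  assumes "1 \<le> \<alpha>" and "0 < s"
  shows "exp (- (\<bar>u\<bar> powr \<alpha>) * s) \<le> 2 / (1 + (s powr (1 / \<alpha>) * u)\<^sup>2)"
proof -
  define w where "w = \<bar>u\<bar> * s powr (1 / \<alpha>)"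
  have "w powr \<alpha> = \<bar>u\<bar> powr \<alpha> * s"
    using assms by (simp add: w_def powr_mult powr_powr)
  moreover have "(s powr (1 / \<alpha>) * u)\<^sup>2 = w\<^sup>2"
    by (simp add: w_def power2_eq_square)
  moreover have "exp (- (w powr \<alpha>)) \<le> 2 / (1 + w\<^sup>2)"
  proof (cases "w \<le> 1")
    case True
    then have "1 \<le> 2 / (1 + w\<^sup>2)"
      by (simp add: w_def le_divide_eq power_le_one add_pos_nonneg)
    then show ?thesis by (smt (verit) exp_le_one_iff powr_ge_zero)
  next
    case False
    then have "w \<le> w powr \<alpha>"
      using powr_mono[of 1 \<alpha> w] assms by simp
    then have "exp (- (w powr \<alpha>)) \<le> exp (- w)" by simp
    also have "\<dots> \<le> 2 / (1 + w\<^sup>2)"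
      using False by (intro exp_neg_le_cauchy) simp
    finally show ?thesis .
  qed
  ultimately show ?thesis by simp
qed

lemma interval_integral_cauchy:
  fixes \<sigma> c a b :: real
  assumes "0 < \<sigma>"
  shows "(LBINT t=a..b. c / (1 + (\<sigma> * t)\<^sup>2)) = c * (arctan (\<sigma> * b) - arctan (\<sigma> * a)) / \<sigma>"
proof -
  have nz: "1 + (\<sigma> * t)\<^sup>2 \<noteq> 0" for t
    by (smt (verit) zero_le_power2)
  have "((\<lambda>t. c * arctan (\<sigma> * t) / \<sigma>) has_real_derivative c / (1 + (\<sigma> * t)\<^sup>2)) (at t)" for t
  proof -
    have "c * (inverse (1 + (\<sigma> * t)\<^sup>2) * \<sigma>) / \<sigma> = c / (1 + (\<sigma> * t)\<^sup>2)"
      using assms by (simp add: divide_inverse)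
    moreover have "((\<lambda>t. c * arctan (\<sigma> * t) / \<sigma>) has_real_derivative
        c * (inverse (1 + (\<sigma> * t)\<^sup>2) * \<sigma>) / \<sigma>) (at t)"
      using assms by (intro derivative_eq_intros) auto
    ultimately show ?thesis by metis
  qed
  then have "(LBINT t=a..b. c / (1 + (\<sigma> * t)\<^sup>2)) = c * arctan (\<sigma> * b) / \<sigma> - c * arctan (\<sigma> * a) / \<sigma>"
    by (intro interval_integral_FTC_finite continuous_intros)
       (auto simp: nz has_real_derivative_iff_has_vector_derivative has_vector_derivative_at_within)
  then show ?thesis by (simp add: diff_divide_distrib right_diff_distrib)
qed

lemma set_integral_one_minus_cos:
  fixes u x :: real
  assumes "x \<noteq> 0" and "0 \<le> u"
  shows "(LBINT t:{- u..u}. 1 - cos (t * x)) = 2 * (u - sin (u * x) / x)"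
proof -
  have "((\<lambda>t. t - sin (t * x) / x) has_real_derivative 1 - cos (t * x)) (at t)" for t
    using assms by (auto intro!: derivative_eq_intros)
  then have "(LBINT t = - u..u. 1 - cos (t * x)) = (u - sin (u * x) / x) - (- u - sin (- u * x) / x)"
    by (intro interval_integral_FTC_finite continuous_intros)
       (auto simp: has_real_derivative_iff_has_vector_derivative has_vector_derivative_at_within)
  then show ?thesis
    using assms by (simp add: interval_integral_Icc)
qed

lemma set_integral_one_minus_cos_ge:
  fixes u x :: real
  assumes u: "0 < u"
  shows "u * indicator {y. 2 / u \<le> \<bar>y\<bar>} x \<le> (LBINT t:{- u..u}. 1 - cos (t * x))"
proof (cases "x = 0")
  case False
  define q where "q = sin (u * x) / x"
  have "q \<le> u"
    using abs_sin_x_le_abs_x[of "u * x"] False u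
    by (auto simp: q_def divide_le_eq abs_le_iff abs_mult mult.commute split: if_splits)
  moreover have "q \<le> u / 2" if "2 / u \<le> \<bar>x\<bar>"
  proof -
    have "q \<le> 1 / \<bar>x\<bar>"
      using abs_sin_le_one[of "u * x"] False
      by (auto simp: q_def divide_le_eq abs_le_iff split: if_splits)
    also have "\<dots> \<le> u / 2"
      using that u by (simp add: divide_le_eq field_simps)
    finally show ?thesis .
  qed
  ultimately show ?thesis
    using set_integral_one_minus_cos[OF False less_imp_le[OF u]]
    unfolding q_def[symmetric] indicator_def by auto
qed (use u in \<open>simp add: indicator_def\<close>)

lemma ex_power2_between:
  fixes x :: real
  assumes "1 \<le> x"
  shows "\<exists>j. 2 ^ j \<le> x \<and> x < 2 ^ Suc j"
proof -
  define j where "j = nat \<lfloor>log 2 x\<rfloor>"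
  have j: "real j = of_int \<lfloor>log 2 x\<rfloor>"
    using assms by (simp add: j_def)
  have "(2::real) ^ j = 2 powr real j"
    by (simp add: powr_realpow)
  also have "\<dots> \<le> 2 powr log 2 x"
    unfolding j by (intro powr_mono) auto
  also have "\<dots> = x"
    using assms by simp
  finally have "2 ^ j \<le> x" .
  moreover have "x < 2 ^ Suc j"
  proof -
    have "x = 2 powr log 2 x"
      using assms by simp
    also have "\<dots> < 2 powr real (Suc j)"
      unfolding of_nat_Suc j using real_of_int_floor_add_one_gt[of "log 2 x"]
      by (intro powr_less_mono) linarith+
    also have "\<dots> = 2 ^ Suc j"
      by (rule powr_realpow) simp
    finally show ?thesis .
  qed
  ultimately show ?thesis by blast
qed

lemma norm_iexp_diff_div_le:
  fixes a b t :: real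
  assumes "a \<le> b"
  shows "cmod ((iexp (- (t * a)) - iexp (- (t * b))) / (\<i> * t)) \<le> b - a"
proof (cases "t = 0")
  case False
  have "(iexp (- (t * a)) - iexp (- (t * b))) / (\<i> * t) = (iexp (- t * b) - iexp (- t * a)) / (\<i> * - t)"
    by (simp add: minus_divide_divide minus_divide_left)
  then show ?thesis
    using Levy_Inversion_aux2[OF assms, of "- t"] False by simp
qed (use assms in simp)

lemma norm_interval_integral_le_cauchy:
  fixes G :: "real \<Rightarrow> complex" and \<sigma> K T :: real
  assumes \<sigma>: "0 < \<sigma>" and G_measurable: "G \<in> borel_measurable borel"
    and G_le: "\<And>t. cmod (G t) \<le> K / (1 + (\<sigma> * t)\<^sup>2)" and T: "0 \<le> T"
  shows "norm (CLBINT t = - T..T. G t) \<le> K * pi / \<sigma>"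
proof -
  have K: "0 \<le> K"
    using G_le[of 0] by (simp add: order_trans[OF norm_ge_zero])
  have "K / (1 + (\<sigma> * t)\<^sup>2) \<le> K" for t
    using divide_left_mono[of 1 "1 + (\<sigma> * t)\<^sup>2" K] K by (simp add: add_pos_nonneg)
  then have G_integrable: "complex_set_integrable lborel {- T..T} G"
    unfolding set_integrable_def using G_measurable G_le
    by (intro integrableI_bounded_set_indicator[where B = K])
       (auto simp: emeasure_lborel_Icc_eq intro: order_trans)
  have cauchy_integrable: "set_integrable lborel {- T..T} (\<lambda>t. K / (1 + (\<sigma> * t)\<^sup>2))"
    unfolding set_integrable_def
    by (intro borel_integrable_compact continuous_intros) (auto simp: add_nonneg_eq_0_iff)
  have "norm (CLBINT t = - T..T. G t) = norm (CLBINT t:{- T..T}. G t)"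
    using T by (simp add: interval_integral_Icc)
  also have "\<dots> \<le> (LBINT t:{- T..T}. norm (G t))"
    using G_integrable by (rule set_integral_norm_bound)
  also have "\<dots> \<le> (LBINT t:{- T..T}. K / (1 + (\<sigma> * t)\<^sup>2))"
    using G_integrable cauchy_integrable G_le by (intro set_integral_mono set_integrable_norm)
  also have "\<dots> = K * (arctan (\<sigma> * T) - arctan (\<sigma> * - T)) / \<sigma>"
    using interval_integral_cauchy[OF \<sigma>] T by (simp add: interval_integral_Icc[symmetric])
  also have "\<dots> \<le> K * pi / \<sigma>"
    using arctan_ubound[of "\<sigma> * T"] arctan_lbound[of "\<sigma> * - T"] K \<sigma>
    by (intro divide_right_mono mult_left_mono) auto
  finally show ?thesis .
qed

context real_distribution
begin

lemma measure_Ioc_le_char_cauchy: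
  fixes \<sigma> C a b :: real
  assumes \<sigma>: "0 < \<sigma>" and char_le: "\<And>u. cmod (char M u) \<le> C / (1 + (\<sigma> * u)\<^sup>2)"
    and ab: "a \<le> b" and "measure M {a} = 0" and "measure M {b} = 0"
  shows "measure M {a<..b} \<le> C * (b - a) / (2 * \<sigma>)"
proof -
  define G where "G t = (iexp (- (t * a)) - iexp (- (t * b))) / (\<i> * t) * char M t" for t
  have "G \<in> borel_measurable borel"
    unfolding G_def by measurable
  moreover have "cmod (G t) \<le> (b - a) * C / (1 + (\<sigma> * t)\<^sup>2)" for t
    unfolding G_def norm_mult times_divide_eq_right[symmetric]
    using ab by (intro mult_mono norm_iexp_diff_div_le char_le) auto
  ultimately have truncated_le: "norm (CLBINT t = - T..T. G t) \<le> (b - a) * C * pi / \<sigma>" for T :: nat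
    using norm_interval_integral_le_cauchy[OF \<sigma>, of G "(b - a) * C" "real T"] by simp
  have "(\<lambda>T. 1 / (2 * pi) * (CLBINT t = - T..T. G t)) \<longlonglongrightarrow> complex_of_real (measure M {a<..b})"
    using Levy_Inversion[OF ab] assms unfolding G_def by simp
  then have "norm (complex_of_real (measure M {a<..b})) \<le> C * (b - a) / (2 * \<sigma>)"
  proof (rule LIMSEQ_le_const2[OF tendsto_norm], intro exI allI impI)
    fix T :: nat
    have "norm (1 / (2 * pi) * (CLBINT t = - T..T. G t)) = norm (CLBINT t = - T..T. G t) / (2 * pi)"
      by (simp add: norm_divide)
    also have "\<dots> \<le> (b - a) * C * pi / \<sigma> / (2 * pi)"
      using truncated_le[of T] by (intro divide_right_mono) auto
    finally show "norm (1 / (2 * pi) * (CLBINT t = - T..T. G t)) \<le> C * (b - a) / (2 * \<sigma>)"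
      by (simp add: mult.commute)
  qed
  then show ?thesis by simp
qed

lemma measure_Icc_le_char_cauchy:
  fixes \<sigma> C a b :: real
  assumes \<sigma>: "0 < \<sigma>" and char_le: "\<And>u. cmod (char M u) \<le> C / (1 + (\<sigma> * u)\<^sup>2)"
    and ab: "a \<le> b"
  shows "measure M {a..b} \<le> C * (b - a) / (2 * \<sigma>)"
proof (rule field_le_epsilon)
  fix e :: real
  assume e: "0 < e"
  have C: "0 \<le> C"
    using char_le[of 0] by (simp add: order_trans[OF norm_ge_zero])
  define \<eta> where "\<eta> = e * \<sigma> / (C + 1)"
  have \<eta>: "0 < \<eta>"
    using e \<sigma> C by (simp add: \<eta>_def)
  have continuity_point: "\<exists>x\<in>{p<..<q}. measure M {x} = 0" if "p < q" for p q
    using open_minus_countable[OF countable_support, of "{p<..<q}"] that by auto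
  obtain a' where a': "a' \<in> {a - \<eta><..<a}" "measure M {a'} = 0"
    using continuity_point[of "a - \<eta>" a] \<eta> by auto
  obtain b' where b': "b' \<in> {b<..<b + \<eta>}" "measure M {b'} = 0"
    using continuity_point[of b "b + \<eta>"] \<eta> by auto
  have "measure M {a..b} \<le> measure M {a'<..b'}"
    using a' b' by (intro finite_measure_mono) auto
  also have "\<dots> \<le> C * (b' - a') / (2 * \<sigma>)"
    using a' b' ab by (intro measure_Ioc_le_char_cauchy[OF \<sigma> char_le]) auto
  also have "\<dots> \<le> C * (b - a + 2 * \<eta>) / (2 * \<sigma>)"
    using a' b' C \<sigma> by (intro divide_right_mono mult_left_mono) auto
  also have "\<dots> = C * (b - a) / (2 * \<sigma>) + C / (C + 1) * e"
    using \<sigma> C by (simp add: \<eta>_def field_simps)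
  also have "\<dots> \<le> C * (b - a) / (2 * \<sigma>) + e"
    using C e by (simp add: field_simps)
  finally show "measure M {a..b} \<le> C * (b - a) / (2 * \<sigma>) + e" .
qed

lemma measure_Icc_le_stable:
  fixes \<alpha> s a b :: real
  assumes char: "\<And>u. char M u = exp (- (\<bar>u\<bar> powr \<alpha>) * s)"
    and "1 \<le> \<alpha>" and "0 < s" and "a \<le> b"
  shows "measure M {a..b} \<le> (b - a) / s powr (1 / \<alpha>)"
proof -
  have "measure M {a..b} \<le> 2 * (b - a) / (2 * s powr (1 / \<alpha>))"
    using assms exp_neg_powr_le_cauchy by (intro measure_Icc_le_char_cauchy) (auto simp: char)
  then show ?thesis
    using assms by (simp add: field_simps)
qed

lemma Re_char: "Re (char M t) = (\<integral>x. cos (t * x) \<partial>M)"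
proof -
  have "Re (char M t) = (\<integral>x. Re (iexp (t * x)) \<partial>M)"
    unfolding char_def by (simp add: integrable_iexp)
  then show ?thesis
    by (simp add: cos_exp_eq Re_exp)
qed

lemma truncation_inequality:
  fixes u :: real
  assumes u: "0 < u"
  shows "u * measure M {x. 2 / u \<le> \<bar>x\<bar>} \<le> (LBINT t:{- u..u}. 1 - Re (char M t))"
proof -
  interpret P: pair_sigma_finite M lborel ..
  define f where "f x t = indicator {- u..u} t * (1 - cos (t * x))" for x t :: real
  have "integrable (M \<Otimes>\<^sub>M lborel) (\<lambda>p. indicator (space M \<times> {- u..u}) p *\<^sub>R (1 - cos (snd p * fst p)))"
  proof (intro integrableI_bounded_set_indicator[where B = 2])
    have "emeasure (M \<Otimes>\<^sub>M lborel) (space M \<times> {- u..u}) = emeasure M (space M) * emeasure lborel {- u..u}"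
      by (intro lborel.emeasure_pair_measure_Times) auto
    then show "emeasure (M \<Otimes>\<^sub>M lborel) (space M \<times> {- u..u}) < \<infinity>"
      using u emeasure_space_1 by (simp add: emeasure_lborel_Icc_eq ennreal_mult_less_top)
  qed auto
  moreover have "(\<lambda>p. indicator (space M \<times> {- u..u}) p *\<^sub>R (1 - cos (snd p * fst p))) = case_prod f"
    by (auto simp: f_def indicator_times fun_eq_iff)
  ultimately have f_integrable: "integrable (M \<Otimes>\<^sub>M lborel) (case_prod f)"
    by simp
  have one_minus_Re_char: "1 - Re (char M t) = (\<integral>x. 1 - cos (t * x) \<partial>M)" for t
  proof -
    have "integrable M (\<lambda>x. cos (t * x))"
      by (intro integrable_const_bound[where B = 1]) auto
    then show ?thesis
      using prob_space by (simp add: Re_char)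
  qed
  have tail_sets: "{y. 2 / u \<le> \<bar>y\<bar>} \<in> sets M"
    by (auto intro!: borel_closed closed_Collect_le continuous_intros)
  then have "u * measure M {y. 2 / u \<le> \<bar>y\<bar>} = (\<integral>x. u * indicator {y. 2 / u \<le> \<bar>y\<bar>} x \<partial>M)"
    by (simp add: emeasure_eq_measure)
  also have "\<dots> \<le> (\<integral>x. (LBINT t:{- u..u}. 1 - cos (t * x)) \<partial>M)"
  proof (rule integral_mono)
    show "integrable M (\<lambda>x. LBINT t:{- u..u}. 1 - cos (t * x))"
      using P.integrable_fst[OF f_integrable] by (simp add: f_def[abs_def] set_lebesgue_integral_def)
    show "integrable M (\<lambda>x. u * indicator {y. 2 / u \<le> \<bar>y\<bar>} x)"
      using tail_sets by (intro integrable_mult_right integrable_real_indicator) (auto simp: emeasure_eq_measure)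
  qed (rule set_integral_one_minus_cos_ge[OF u])
  also have "\<dots> = (\<integral>t. (\<integral>x. f x t \<partial>M) \<partial>lborel)"
    unfolding P.Fubini_integral[OF f_integrable] by (simp add: f_def[abs_def] set_lebesgue_integral_def)
  also have "\<dots> = (LBINT t:{- u..u}. 1 - Re (char M t))"
    unfolding set_lebesgue_integral_def f_def one_minus_Re_char by simp
  finally show ?thesis .
qed

lemma measure_abs_ge_le_stable:
  fixes \<alpha> d x :: real
  assumes char: "\<And>v. char M v = exp (- (\<bar>v\<bar> powr \<alpha>) * d)"
    and "0 \<le> \<alpha>" and "0 \<le> d" and "0 < x"
  shows "measure M {y. x \<le> \<bar>y\<bar>} \<le> 2 * (2 / x) powr \<alpha> * d"
proof -
  define u where "u = 2 / x"
  have u: "0 < u"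
    using assms by (simp add: u_def)
  have "u * measure M {y. x \<le> \<bar>y\<bar>} \<le> (LBINT t:{- u..u}. 1 - Re (char M t))"
    using truncation_inequality[OF u] assms by (simp add: u_def)
  also have "\<dots> \<le> (LBINT t:{- u..u}. u powr \<alpha> * d)"
  proof (rule set_integral_mono)
    show "set_integrable lborel {- u..u} (\<lambda>t. 1 - Re (char M t))"
      unfolding set_integrable_def
      by (intro borel_integrable_compact continuous_at_imp_continuous_on ballI continuous_intros isCont_char) auto
    show "set_integrable lborel {- u..u} (\<lambda>t. u powr \<alpha> * d)"
      unfolding set_integrable_def by (intro borel_integrable_compact continuous_intros) auto
    show "1 - Re (char M t) \<le> u powr \<alpha> * d" if "t \<in> {- u..u}" for t
    proof -
      have "1 - Re (char M t) \<le> \<bar>t\<bar> powr \<alpha> * d"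
        using exp_ge_add_one_self[of "- (\<bar>t\<bar> powr \<alpha>) * d"] by (simp add: char)
      also have "\<dots> \<le> u powr \<alpha> * d"
        using that assms by (intro mult_right_mono powr_mono2) auto
      finally show ?thesis .
    qed
  qed
  also have "\<dots> = u * (2 * u powr \<alpha> * d)"
    using u by (simp add: set_lebesgue_integral_def)
  finally have "measure M {y. x \<le> \<bar>y\<bar>} \<le> 2 * u powr \<alpha> * d"
    using u by (simp add: mult_le_cancel_left_pos)
  then show ?thesis
    by (simp add: u_def)
qed

end

definition crossing_const :: "real \<Rightarrow> real" where
  "crossing_const \<alpha> = 2 + 8 * 2 powr \<alpha> / (1 - 2 powr (1 - \<alpha>))"

lemma crossing_const_eq:
  fixes \<alpha> s d :: real
  assumes \<alpha>: "1 < \<alpha>" and s: "0 < s" and d: "0 < d"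
  shows "2 / s powr (1 / \<alpha>) * d powr (1 / \<alpha>)
      + 2 * (2 / s powr (1 / \<alpha>)) * (2 * 2 powr \<alpha> * d) * (d powr (1 / \<alpha>)) powr (1 - \<alpha>) / (1 - 2 powr (1 - \<alpha>))
    = crossing_const \<alpha> * (d / s) powr (1 / \<alpha>)"
proof -
  have "d * (d powr (1 / \<alpha>)) powr (1 - \<alpha>) = d powr 1 * d powr ((1 - \<alpha>) / \<alpha>)"
    using d by (simp add: powr_powr)
  also have "\<dots> = d powr (1 + (1 - \<alpha>) / \<alpha>)"
    by (simp add: powr_add)
  also have "1 + (1 - \<alpha>) / \<alpha> = 1 / \<alpha>"
    using \<alpha> by (simp add: field_simps)
  finally have d_powr: "(d powr (1 / \<alpha>)) powr (1 - \<alpha>) = d powr (1 / \<alpha>) / d"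
    using d by (simp add: field_simps)
  define D where "D = 1 - 2 powr (1 - \<alpha>)"
  have "0 < D"
    unfolding D_def using \<alpha> by (simp add: powr_less_one)
  then show ?thesis
    unfolding d_powr crossing_const_def D_def[symmetric] using s d
    by (simp add: powr_divide field_simps)
qed

lemma crossing_const_nonneg:
  assumes "1 < \<alpha>"
  shows "0 \<le> crossing_const \<alpha>"
proof -
  have "2 powr (1 - \<alpha>) < 1"
    using assms by (intro powr_less_one) auto
  then show ?thesis
    by (simp add: crossing_const_def)
qed

context prob_space
begin

lemma indep_vars_indep_var:
  assumes indep: "indep_vars M' X I" and "i \<in> I" "j \<in> I" "i \<noteq> j"
  shows "indep_var (M' i) (X i) (M' j) (X j)"
proof -
  have "indep_var (M' i) ((\<lambda>f. f i) \<circ> (\<lambda>\<omega>. restrict (\<lambda>i. X i \<omega>) {i}))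
      (M' j) ((\<lambda>f. f j) \<circ> (\<lambda>\<omega>. restrict (\<lambda>i. X i \<omega>) {j}))"
    using assms by (intro indep_var_compose[OF indep_var_restrict[OF indep]]) auto
  then show ?thesis
    by (simp add: comp_def)
qed

lemma indep_var_prob_conj:
  assumes indep: "indep_var S X T Y" and A: "A \<in> sets S" and B: "B \<in> sets T"
  shows "prob {\<omega> \<in> space M. X \<omega> \<in> A \<and> Y \<omega> \<in> B}
    = prob {\<omega> \<in> space M. X \<omega> \<in> A} * prob {\<omega> \<in> space M. Y \<omega> \<in> B}"
proof -
  have "indep_set (sigma_sets (space M) {X -` A \<inter> space M | A. A \<in> sets S})
      (sigma_sets (space M) {Y -` A \<inter> space M | A. A \<in> sets T})"
    using indep by (simp add: indep_var_eq)
  then have "prob ((X -` A \<inter> space M) \<inter> (Y -` B \<inter> space M)) = prob (X -` A \<inter> space M) * prob (Y -` B \<inter> space M)"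
    using A B unfolding indep_sets2_eq by (blast intro: sigma_sets.Basic)
  moreover have "{\<omega> \<in> space M. X \<omega> \<in> A \<and> Y \<omega> \<in> B} = (X -` A \<inter> space M) \<inter> (Y -` B \<inter> space M)"
    and "{\<omega> \<in> space M. X \<omega> \<in> A} = X -` A \<inter> space M" and "{\<omega> \<in> space M. Y \<omega> \<in> B} = Y -` B \<inter> space M"
    by auto
  ultimately show ?thesis
    by (simp only:)
qed

lemma abs_integral_le_prob_nonzero:
  fixes f :: "'a \<Rightarrow> real"
  assumes [measurable]: "f \<in> borel_measurable M" and f_le: "\<And>\<omega>. \<omega> \<in> space M \<Longrightarrow> \<bar>f \<omega>\<bar> \<le> 1"
  shows "\<bar>\<integral>\<omega>. f \<omega> \<partial>M\<bar> \<le> prob {\<omega> \<in> space M. f \<omega> \<noteq> 0}"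
proof -
  have nonzero_sets: "{\<omega> \<in> space M. f \<omega> \<noteq> 0} \<in> sets M"
    by measurable
  have "\<bar>\<integral>\<omega>. f \<omega> \<partial>M\<bar> \<le> (\<integral>\<omega>. \<bar>f \<omega>\<bar> \<partial>M)"
    by (rule integral_abs_bound)
  also have "\<dots> \<le> (\<integral>\<omega>. indicator {\<omega> \<in> space M. f \<omega> \<noteq> 0} \<omega> \<partial>M)"
    using f_le nonzero_sets
    by (intro integral_mono integrable_const_bound[where B = 1] integrable_real_indicator)
       (auto simp: indicator_def)
  also have "\<dots> = prob {\<omega> \<in> space M. f \<omega> \<noteq> 0}"
    using nonzero_sets by simp
  finally show ?thesis .
qed

lemma prob_shell_le:
  fixes Y Z :: "'a \<Rightarrow> real" and c K L \<alpha> R :: real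
  assumes indep: "indep_var borel Y borel Z"
    and conc: "\<And>\<rho>. 0 \<le> \<rho> \<Longrightarrow> prob {\<omega> \<in> space M. \<bar>Y \<omega> - c\<bar> \<le> \<rho>} \<le> K * \<rho>"
    and tail: "\<And>x. 0 < x \<Longrightarrow> prob {\<omega> \<in> space M. x \<le> \<bar>Z \<omega>\<bar>} \<le> L / x powr \<alpha>"
    and R: "0 < R"
  shows "prob {\<omega> \<in> space M. \<bar>Y \<omega> - c\<bar> \<le> 2 * R \<and> R \<le> \<bar>Z \<omega>\<bar>} \<le> 2 * K * L * R powr (1 - \<alpha>)"
proof -
  have "prob {\<omega> \<in> space M. \<bar>Y \<omega> - c\<bar> \<le> 2 * R \<and> R \<le> \<bar>Z \<omega>\<bar>}
      = prob {\<omega> \<in> space M. \<bar>Y \<omega> - c\<bar> \<le> 2 * R} * prob {\<omega> \<in> space M. R \<le> \<bar>Z \<omega>\<bar>}"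
    using indep_var_prob_conj[OF indep, of "{y. \<bar>y - c\<bar> \<le> 2 * R}" "{z. R \<le> \<bar>z\<bar>}"] by simp
  also have "\<dots> \<le> (K * (2 * R)) * (L / R powr \<alpha>)"
    using R conc[of "2 * R"] order_trans[OF measure_nonneg conc[of "2 * R"]]
    by (intro mult_mono tail) auto
  also have "\<dots> = 2 * K * L * R powr (1 - \<alpha>)"
    using R by (simp add: powr_diff)
  finally show ?thesis .
qed

lemma prob_abs_le_abs_indep:
  fixes Y Z :: "'a \<Rightarrow> real" and c K L \<alpha> r :: real
  assumes indep: "indep_var borel Y borel Z"
    and conc: "\<And>\<rho>. 0 \<le> \<rho> \<Longrightarrow> prob {\<omega> \<in> space M. \<bar>Y \<omega> - c\<bar> \<le> \<rho>} \<le> K * \<rho>"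
    and tail: "\<And>x. 0 < x \<Longrightarrow> prob {\<omega> \<in> space M. x \<le> \<bar>Z \<omega>\<bar>} \<le> L / x powr \<alpha>"
    and \<alpha>: "1 < \<alpha>" and r: "0 < r"
  shows "prob {\<omega> \<in> space M. \<bar>Y \<omega> - c\<bar> \<le> \<bar>Z \<omega>\<bar>}
    \<le> K * r + 2 * K * L * r powr (1 - \<alpha>) / (1 - 2 powr (1 - \<alpha>))"
proof -
  have [measurable]: "Y \<in> borel_measurable M" "Z \<in> borel_measurable M"
    using indep_var_rv1[OF indep] indep_var_rv2[OF indep] by auto
  define q :: real where "q = 2 powr (1 - \<alpha>)"
  have q: "0 \<le> q" "q < 1"
    using \<alpha> by (auto simp: q_def powr_less_one)
  \<comment> \<open>Dyadic shells of \<open>|Z|\<close>: the bound for the \<open>j\<close>-th shell decays like \<open>q ^ j\<close> because \<open>\<alpha> > 1\<close>.\<close>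
  define A where "A j = {\<omega> \<in> space M. \<bar>Y \<omega> - c\<bar> \<le> 2 * (2 ^ j * r) \<and> 2 ^ j * r \<le> \<bar>Z \<omega>\<bar>}" for j :: nat
  define B where "B = {\<omega> \<in> space M. \<bar>Y \<omega> - c\<bar> \<le> r}"
  have A_sets: "A j \<in> sets M" for j
    unfolding A_def by measurable
  have B_sets: "B \<in> sets M"
    unfolding B_def by measurable
  have prob_A: "prob (A j) \<le> 2 * K * L * r powr (1 - \<alpha>) * q ^ j" for j
  proof -
    have "((2::real) ^ j) powr (1 - \<alpha>) = q ^ j"
      unfolding q_def powr_realpow[of 2 j, symmetric, simplified] by (simp add: powr_powr powr_power mult.commute)
    then show ?thesis
      using prob_shell_le[OF indep conc tail, of "2 ^ j * r"] r by (simp add: A_def powr_mult mult_ac)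
  qed
  have "{\<omega> \<in> space M. \<bar>Y \<omega> - c\<bar> \<le> \<bar>Z \<omega>\<bar>} \<subseteq> B \<union> (\<Union>j. A j)"
  proof
    fix \<omega>
    assume \<omega>: "\<omega> \<in> {\<omega> \<in> space M. \<bar>Y \<omega> - c\<bar> \<le> \<bar>Z \<omega>\<bar>}"
    show "\<omega> \<in> B \<union> (\<Union>j. A j)"
    proof (cases "\<omega> \<in> B")
      case False
      then have "1 \<le> \<bar>Z \<omega>\<bar> / r"
        using \<omega> r by (simp add: B_def)
      then obtain j where "2 ^ j \<le> \<bar>Z \<omega>\<bar> / r" "\<bar>Z \<omega>\<bar> / r < 2 ^ Suc j"
        using ex_power2_between by blast
      then have "\<omega> \<in> A j"
        using \<omega> r by (auto simp: A_def field_simps)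
      then show ?thesis
        by blast
    qed simp
  qed
  then have "prob {\<omega> \<in> space M. \<bar>Y \<omega> - c\<bar> \<le> \<bar>Z \<omega>\<bar>} \<le> prob (B \<union> (\<Union>j. A j))"
    using A_sets B_sets by (intro finite_measure_mono) auto
  also have "\<dots> \<le> prob B + prob (\<Union>j. A j)"
    using A_sets B_sets by (intro measure_Un_le) auto
  also have "prob B \<le> K * r"
    unfolding B_def using r by (intro conc) auto
  also have "prob (\<Union>j. A j) \<le> (\<Sum>j. 2 * K * L * r powr (1 - \<alpha>) * q ^ j)"
  proof -
    have summable_bound: "summable (\<lambda>j. 2 * K * L * r powr (1 - \<alpha>) * q ^ j)"
      using q by (intro summable_mult summable_geometric) auto
    moreover have "summable (\<lambda>j. prob (A j))"
      by (rule summable_comparison_test'[OF summable_bound]) (use prob_A in auto)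
    ultimately show ?thesis
      using A_sets prob_A by (intro order_trans[OF finite_measure_subadditive_countably suminf_le]) auto
  qed
  also have "\<dots> = 2 * K * L * r powr (1 - \<alpha>) / (1 - q)"
    using q by (simp add: suminf_mult suminf_geometric divide_inverse)
  finally show ?thesis
    by (simp add: q_def)
qed

lemma prob_abs_le_abs_indep_stable:
  fixes Y Z :: "'a \<Rightarrow> real" and \<alpha> s d c :: real
  assumes indep: "indep_var borel Y borel Z" and \<alpha>: "1 < \<alpha>" and s: "0 < s" and d: "0 < d"
    and char_Y: "\<And>u. char (distr M borel Y) u = exp (- (\<bar>u\<bar> powr \<alpha>) * s)"
    and char_Z: "\<And>u. char (distr M borel Z) u = exp (- (\<bar>u\<bar> powr \<alpha>) * d)"
  shows "prob {\<omega> \<in> space M. \<bar>Y \<omega> - c\<bar> \<le> \<bar>Z \<omega>\<bar>} \<le> crossing_const \<alpha> * (d / s) powr (1 / \<alpha>)"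
proof -
  have [measurable]: "Y \<in> borel_measurable M" "Z \<in> borel_measurable M"
    using indep_var_rv1[OF indep] indep_var_rv2[OF indep] by auto
  interpret Y: real_distribution "distr M borel Y"
    by simp
  interpret Z: real_distribution "distr M borel Z"
    by simp
  have conc: "prob {\<omega> \<in> space M. \<bar>Y \<omega> - c\<bar> \<le> \<rho>} \<le> 2 / s powr (1 / \<alpha>) * \<rho>" if "0 \<le> \<rho>" for \<rho>
  proof -
    have "prob {\<omega> \<in> space M. \<bar>Y \<omega> - c\<bar> \<le> \<rho>} = measure (distr M borel Y) {c - \<rho>..c + \<rho>}"
      by (subst measure_distr) (auto intro!: arg_cong[where f = prob] simp: abs_le_iff)
    also have "\<dots> \<le> ((c + \<rho>) - (c - \<rho>)) / s powr (1 / \<alpha>)"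
      using \<alpha> s that by (intro Y.measure_Icc_le_stable[OF char_Y]) auto
    finally show ?thesis
      by simp
  qed
  have tail: "prob {\<omega> \<in> space M. x \<le> \<bar>Z \<omega>\<bar>} \<le> 2 * 2 powr \<alpha> * d / x powr \<alpha>" if "0 < x" for x
  proof -
    have "prob {\<omega> \<in> space M. x \<le> \<bar>Z \<omega>\<bar>} = measure (distr M borel Z) {y. x \<le> \<bar>y\<bar>}"
      by (subst measure_distr) (auto intro!: arg_cong[where f = prob])
    also have "\<dots> \<le> 2 * (2 / x) powr \<alpha> * d"
      using \<alpha> d that by (intro Z.measure_abs_ge_le_stable[OF char_Z]) auto
    finally show ?thesis
      using that by (simp add: powr_divide)
  qed
  have "0 < d powr (1 / \<alpha>)"
    using d by simp
  from prob_abs_le_abs_indep[OF indep conc tail \<alpha> this] show ?thesis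
    unfolding crossing_const_eq[OF \<alpha> s d] .
qed

end

lemma sym_stable_levy_indep_increments:
  assumes L: "sym_stable_levy M \<alpha> X" and "0 \<le> s" "s \<le> t"
  shows "prob_space.indep_var M borel (\<lambda>\<omega>. X s \<omega> - X 0 \<omega>) borel (\<lambda>\<omega>. X t \<omega> - X s \<omega>)"
proof -
  interpret prob_space M
    using L by (simp add: sym_stable_levy_def)
  define ts :: "nat \<Rightarrow> real" where "ts i = (if i = 0 then 0 else if i = 1 then s else t)" for i
  have indep: "\<And>ts m. 0 \<le> ts 0 \<Longrightarrow> (\<forall>i<m. ts i \<le> ts (Suc i)) \<Longrightarrow>
      indep_vars (\<lambda>_. borel) (\<lambda>i \<omega>. X (ts (Suc i)) \<omega> - X (ts i) \<omega>) {..<m}"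
    using L by (simp add: sym_stable_levy_def)
  have "indep_vars (\<lambda>_. borel) (\<lambda>i \<omega>. X (ts (Suc i)) \<omega> - X (ts i) \<omega>) {..<2}"
    by (rule indep) (use assms in \<open>auto simp: ts_def less_2_cases_iff\<close>)
  from indep_vars_indep_var[OF this, of 0 1] show ?thesis
    by (simp add: ts_def)
qed

lemma ind_ab_measurable [measurable]: "ind_ab a b \<in> borel_measurable borel"
  unfolding ind_ab_def by measurable

lemma abs_ind_ab_diff_le_1: "\<bar>ind_ab a b x - ind_ab a b y\<bar> \<le> 1"
  by (simp add: ind_ab_def)

(* For an infinite endpoint real_of_ereal returns 0 and that disjunct is junk; the change then
   happens at the other endpoint. *)
lemma ind_ab_change_imp_near_endpoint:
  assumes "ind_ab a b (y + z) \<noteq> ind_ab a b y"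
  shows "\<bar>y - real_of_ereal a\<bar> \<le> \<bar>z\<bar> \<or> \<bar>y - real_of_ereal b\<bar> \<le> \<bar>z\<bar>"
  using assms unfolding ind_ab_def by (cases a; cases b) (auto split: if_splits)

lemma sym_stable_levy_prob_ind_ab_change:
  assumes L: "sym_stable_levy M \<alpha> X" and \<alpha>: "1 < \<alpha>" and s: "0 < s" "s \<le> t"
  shows "measure M {\<omega> \<in> space M. ind_ab a b (X t \<omega>) \<noteq> ind_ab a b (X s \<omega>)}
    \<le> 2 * crossing_const \<alpha> * ((t - s) / s) powr (1 / \<alpha>)"
proof (cases "s = t")
  case True
  then show ?thesis
    using crossing_const_nonneg[OF \<alpha>] by simp
next
  case False
  interpret prob_space M
    using L by (simp add: sym_stable_levy_def)
  have [measurable]: "X 0 \<in> borel_measurable M" "X s \<in> borel_measurable M" "X t \<in> borel_measurable M"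
    using L s by (auto simp: sym_stable_levy_def)
  define Y where "Y \<omega> = X s \<omega> - X 0 \<omega>" for \<omega>
  define Z where "Z \<omega> = X t \<omega> - X s \<omega>" for \<omega>
  define E where "E c = {\<omega> \<in> space M. \<bar>Y \<omega> - c\<bar> \<le> \<bar>Z \<omega>\<bar>}" for c
  have E_sets: "E c \<in> sets M" for c
    unfolding E_def Y_def Z_def by measurable
  have prob_E: "prob (E c) \<le> crossing_const \<alpha> * ((t - s) / s) powr (1 / \<alpha>)" for c
    unfolding E_def
  proof (rule prob_abs_le_abs_indep_stable[OF _ \<alpha> s(1)])
    show "indep_var borel Y borel Z"
      unfolding Y_def Z_def using sym_stable_levy_indep_increments[OF L _ s(2)] s by simp
    show "0 < t - s"
      using False s by simp
    show "char (distr M borel Y) u = exp (- (\<bar>u\<bar> powr \<alpha>) * s)"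
      and "char (distr M borel Z) u = exp (- (\<bar>u\<bar> powr \<alpha>) * (t - s))" for u
      using L s unfolding sym_stable_levy_def Y_def Z_def by force+
  qed
  have "AE \<omega> in M. X 0 \<omega> = 0"
    using L by (simp add: sym_stable_levy_def)
  then have "AE \<omega> in M. ind_ab a b (X t \<omega>) \<noteq> ind_ab a b (X s \<omega>) \<longrightarrow> \<omega> \<in> E (real_of_ereal a) \<union> E (real_of_ereal b)"
  proof (rule AE_mp[OF _ AE_I2], intro impI)
    fix \<omega>
    assume "\<omega> \<in> space M" "X 0 \<omega> = 0" "ind_ab a b (X t \<omega>) \<noteq> ind_ab a b (X s \<omega>)"
    then show "\<omega> \<in> E (real_of_ereal a) \<union> E (real_of_ereal b)"
      using ind_ab_change_imp_near_endpoint[of a b "Y \<omega>" "Z \<omega>"] by (auto simp: E_def Y_def Z_def)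
  qed
  then have "prob {\<omega> \<in> space M. ind_ab a b (X t \<omega>) \<noteq> ind_ab a b (X s \<omega>)}
      \<le> prob (E (real_of_ereal a) \<union> E (real_of_ereal b))"
    using E_sets by (intro finite_measure_mono_AE) auto
  also have "\<dots> \<le> prob (E (real_of_ereal a)) + prob (E (real_of_ereal b))"
    using E_sets by (intro measure_Un_le) auto
  also have "\<dots> \<le> 2 * crossing_const \<alpha> * ((t - s) / s) powr (1 / \<alpha>)"
    using prob_E[of "real_of_ereal a"] prob_E[of "real_of_ereal b"] by simp
  finally show ?thesis .
qed

lemma grid_floor:
  fixes D t :: real and k :: nat
  assumes D: "0 < D" and k: "1 \<le> k" and t: "real (k - 1) * D \<le> t" "t < real k * D"
  shows "D * real_of_int \<lfloor>t / D\<rfloor> = real (k - 1) * D"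
proof -
  have "real (k - 1) \<le> t / D" "t / D < real (k - 1) + 1"
    using t D k by (simp_all add: le_divide_eq divide_less_eq of_nat_diff)
  then have "\<lfloor>t / D\<rfloor> = int (k - 1)"
    by (simp add: floor_eq_iff)
  then show ?thesis by simp
qed

lemma E_tt_le_grid_ratio:
  assumes L: "sym_stable_levy M \<alpha> X" and \<alpha>: "1 < \<alpha>" and D: "0 < D" and k: "2 \<le> k"
    and t: "real (k - 1) * D \<le> t" "t < real k * D" and t': "0 \<le> t'"
  shows "\<bar>E_tt M X a b D t t'\<bar> \<le> 2 * crossing_const \<alpha> * (D / (real (k - 1) * D)) powr (1 / \<alpha>)"
proof -
  interpret prob_space M
    using L by (simp add: sym_stable_levy_def)
  define s where "s = real (k - 1) * D"
  define s' where "s' = D * real_of_int \<lfloor>t' / D\<rfloor>"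
  have s: "0 < s" "s \<le> t"
    using k D t by (simp_all add: s_def)
  have "0 \<le> s'"
    using D t' by (simp add: s'_def)
  then have [measurable]: "X t \<in> borel_measurable M" "X s \<in> borel_measurable M"
    "X t' \<in> borel_measurable M" "X s' \<in> borel_measurable M"
    using L s t' by (auto simp: sym_stable_levy_def)
  define f where "f \<omega> = (ind_ab a b (X t \<omega>) - ind_ab a b (X s \<omega>)) * (ind_ab a b (X t' \<omega>) - ind_ab a b (X s' \<omega>))" for \<omega>
  have "D * real_of_int \<lfloor>t / D\<rfloor> = s"
    using grid_floor[OF D _ t] k by (simp add: s_def)
  then have "E_tt M X a b D t t' = (\<integral>\<omega>. f \<omega> \<partial>M)"
    unfolding E_tt_def f_def s'_def by simp
  also have "\<bar>\<dots>\<bar> \<le> prob {\<omega> \<in> space M. f \<omega> \<noteq> 0}"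
  proof (rule abs_integral_le_prob_nonzero)
    show "f \<in> borel_measurable M"
      unfolding f_def by measurable
    show "\<bar>f \<omega>\<bar> \<le> 1" for \<omega>
      unfolding f_def abs_mult using abs_ind_ab_diff_le_1 by (intro mult_le_one) auto
  qed
  also have "\<dots> \<le> prob {\<omega> \<in> space M. ind_ab a b (X t \<omega>) \<noteq> ind_ab a b (X s \<omega>)}"
    using s by (intro finite_measure_mono) (auto simp: f_def)
  also have "\<dots> \<le> 2 * crossing_const \<alpha> * ((t - s) / s) powr (1 / \<alpha>)"
    by (rule sym_stable_levy_prob_ind_ab_change[OF L \<alpha> s])
  also have "\<dots> \<le> 2 * crossing_const \<alpha> * (D / s) powr (1 / \<alpha>)"
    using s t \<alpha> k crossing_const_nonneg[OF \<alpha>]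
    by (intro mult_left_mono powr_mono2 divide_right_mono) (auto simp: s_def of_nat_diff algebra_simps)
  finally show ?thesis
    unfolding s_def .
qed

lemma ratio_powr_le_rate_i:
  fixes s T D \<alpha> \<epsilon> :: real and n :: nat
  assumes s: "0 < s" "s \<le> T" and D: "0 < D" and \<alpha>: "0 < \<alpha>" and \<epsilon>: "0 \<le> \<epsilon>" and n: "1 \<le> n"
  shows "(D / s) powr (1 / \<alpha>) \<le> max 1 (T powr (\<epsilon> / \<alpha>)) *
    (s powr (-(1 + \<epsilon>) / \<alpha>) * D powr (1 / \<alpha>) + s powr (-1 - \<epsilon> / \<alpha>) * D * ln (real n))"
proof -
  have "s powr (\<epsilon> / \<alpha>) * s powr (-(1 + \<epsilon>) / \<alpha>) = s powr (\<epsilon> / \<alpha> + -(1 + \<epsilon>) / \<alpha>)"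
    by (simp add: powr_add)
  also have "\<epsilon> / \<alpha> + -(1 + \<epsilon>) / \<alpha> = - (1 / \<alpha>)"
    by (simp add: add_divide_distrib[symmetric])
  finally have "(D / s) powr (1 / \<alpha>) = s powr (\<epsilon> / \<alpha>) * (s powr (-(1 + \<epsilon>) / \<alpha>) * D powr (1 / \<alpha>))"
    using s D by (simp add: powr_divide powr_minus_divide mult.assoc[symmetric])
  also have "\<dots> \<le> max 1 (T powr (\<epsilon> / \<alpha>)) * (s powr (-(1 + \<epsilon>) / \<alpha>) * D powr (1 / \<alpha>))"
    using s \<alpha> \<epsilon> by (intro mult_right_mono max.coboundedI2 powr_mono2) auto
  also have "\<dots> \<le> max 1 (T powr (\<epsilon> / \<alpha>)) *
      (s powr (-(1 + \<epsilon>) / \<alpha>) * D powr (1 / \<alpha>) + s powr (-1 - \<epsilon> / \<alpha>) * D * ln (real n))"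
    using n D by (intro mult_left_mono) auto
  finally show ?thesis .
qed

lemma ratio_powr_le_rate_ii:
  fixes s D \<alpha> \<epsilon> :: real
  assumes s: "0 < s" and D: "0 < D"
  shows "(D / s) powr (1 / \<alpha>) \<le> D powr (1 / \<alpha>) * (s powr (-1 / \<alpha>) + s powr (-(1 + \<epsilon>) / \<alpha>))
    + D powr (1 - \<epsilon> / \<alpha>) * s powr (-1 - \<epsilon> / \<alpha>) + D powr (1 - 2 * \<epsilon> / \<alpha>) * s powr (-1)"
proof -
  have "(D / s) powr (1 / \<alpha>) = D powr (1 / \<alpha>) * s powr (-1 / \<alpha>)"
    using s D by (simp add: powr_divide powr_minus_divide mult.assoc[symmetric])
  also have "\<dots> \<le> D powr (1 / \<alpha>) * (s powr (-1 / \<alpha>) + s powr (-(1 + \<epsilon>) / \<alpha>))"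
    by (intro mult_left_mono) auto
  finally show ?thesis
    by (smt (verit) powr_ge_zero mult_nonneg_nonneg)
qed

theorem lemma13:
  fixes \<alpha> :: real
  assumes "1 < \<alpha>" and "\<alpha> \<le> 2"
  shows "\<exists>\<epsilon>0>0. \<forall>\<epsilon>. 0 < \<epsilon> \<and> \<epsilon> < \<epsilon>0 \<longrightarrow> (\<exists>C. \<forall>(M :: 'a measure) X (T::real) (n::nat) (a::ereal) b.
     sym_stable_levy M \<alpha> X \<and> T > 0 \<and> n \<ge> 1 \<and> a \<le> b \<longrightarrow>
     (let \<Delta> = T / real n; tk = (\<lambda>j::nat. real j * \<Delta>) in
      (\<forall>t t' k k'. 0 \<le> t \<and> t \<le> T \<and> 0 \<le> t' \<and> t' \<le> T \<and> 2 \<le> k \<and> k < k' \<and>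
          tk (k - 1) \<le> t \<and> t < tk k \<and> tk (k' - 1) \<le> t' \<and> t' < tk k' \<longrightarrow>
          \<bar>E_tt M X a b \<Delta> t t'\<bar> \<le> C * max 1 (T powr (\<epsilon> / \<alpha>)) *
            (tk (k - 1) powr (-(1 + \<epsilon>) / \<alpha>) * \<Delta> powr (1 / \<alpha>)
             + tk (k - 1) powr (-1 - \<epsilon> / \<alpha>) * \<Delta> * ln (real n))) \<and>
      (\<forall>t t' k. 0 \<le> t \<and> t \<le> T \<and> 0 \<le> t' \<and> t' \<le> T \<and> 2 \<le> k \<and>
          tk (k - 1) < t \<and> t < t' \<and> t' < tk k \<longrightarrow>
          \<bar>E_tt M X a b \<Delta> t t'\<bar> \<le> C * (
            \<Delta> powr (1 / \<alpha>) * (tk (k - 1) powr (-1 / \<alpha>) + tk (k - 1) powr (-(1 + \<epsilon>) / \<alpha>))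
            + \<Delta> powr (1 - \<epsilon> / \<alpha>) * tk (k - 1) powr (-1 - \<epsilon> / \<alpha>)
            + \<Delta> powr (1 - 2 * \<epsilon> / \<alpha>) * tk (k - 1) powr (-1)))))"
proof -
  define C where "C = 2 * crossing_const \<alpha>"
  have C: "0 \<le> C"
    using crossing_const_nonneg[OF assms(1)] by (simp add: C_def)
  have bound_i: "\<bar>E_tt M X a b D t t'\<bar> \<le> C * max 1 (T powr (\<epsilon> / \<alpha>)) *
      ((real (k - 1) * D) powr (-(1 + \<epsilon>) / \<alpha>) * D powr (1 / \<alpha>)
       + (real (k - 1) * D) powr (-1 - \<epsilon> / \<alpha>) * D * ln (real n))"
    if "sym_stable_levy M \<alpha> X" "0 < D" "2 \<le> k" "real (k - 1) * D \<le> t" "t < real k * D" "0 \<le> t'"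
      "t \<le> T" "0 \<le> \<epsilon>" "1 \<le> n"
    for M :: "'a measure" and X a b D t t' k T \<epsilon> n
    using order_trans[OF E_tt_le_grid_ratio[OF that(1) assms(1) that(2-6), folded C_def]
        mult_left_mono[OF ratio_powr_le_rate_i C]] that assms(1)
    by (simp add: mult.assoc)
  have bound_ii: "\<bar>E_tt M X a b D t t'\<bar> \<le> C * (
      D powr (1 / \<alpha>) * ((real (k - 1) * D) powr (-1 / \<alpha>) + (real (k - 1) * D) powr (-(1 + \<epsilon>) / \<alpha>))
      + D powr (1 - \<epsilon> / \<alpha>) * (real (k - 1) * D) powr (-1 - \<epsilon> / \<alpha>)
      + D powr (1 - 2 * \<epsilon> / \<alpha>) * (real (k - 1) * D) powr (-1))"
    if "sym_stable_levy M \<alpha> X" "0 < D" "2 \<le> k" "real (k - 1) * D < t" "t < real k * D" "0 \<le> t'"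
    for M :: "'a measure" and X a b D t t' k \<epsilon>
    using order_trans[OF E_tt_le_grid_ratio[OF that(1) assms(1) that(2-3) less_imp_le[OF that(4)] that(5-6),
        folded C_def] mult_left_mono[OF ratio_powr_le_rate_ii C]] that
    by simp
  show ?thesis
    unfolding Let_def
    by (intro exI[of _ 1] exI[of _ C] conjI allI impI zero_less_one bound_i bound_ii) auto
qed

end
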